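(* Let $R\ge1$, $\Gamma\ge1$, $1\le s_1\le n_1$, $1\le s_2\le n_2$, and assume $s_1/n_1\le s_2/n_2$. Then for $0<\varepsilon<6\Gamma\sqrt R$, $\log N(K^{R,\Gamma}_{s_1,s_2},\|\cdot\|_F,\varepsilon)$ is at most $$\begin{cases}R(n_1+n_2+1)\log\!\big(\frac{36\Gamma R}{\varepsilon}\big), & 0<\varepsilon<12\Gamma\sqrt{\frac{Rs_1}{n_1}},\\[4pt] \frac{144\Gamma^2R^2s_1}{\varepsilon^2}\log\!\big(\frac{9\varepsilon n_1}{6\Gamma\sqrt Rs_1}\big)+R(n_2+1)\log\!\big(\frac{36\Gamma R}{\varepsilon}\big), & 12\Gamma\sqrt{\frac{Rs_1}{n_1}}\le\varepsilon<12\Gamma\sqrt{\frac{Rs_2}{n_2}},\\[4pt] \frac{144\Gamma^2R^2(s_1+s_2)}{\varepsilon^2}\log\!\big(\frac{9\varepsilon n_1}{6\Gamma\sqrt Rs_1}\big)+R\log\!\big(\frac{18\Gamma R}{\varepsilon}\big), & 12\Gamma\sqrt{\frac{Rs_2}{n_2}}\le\varepsilon<6\Gamma\sqrt R.\end{cases}$$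
   Context: $N(M,\|\cdot\|,\varepsilon)$ is the minimal number of $\|\cdot\|$-balls of radius $\varepsilon$ needed to cover $M$. For $n\ge1,s>0$: $K_{n,s}=\{z\in\mathbb{R}^n:\|z\|_2\le1,\|z\|_1\le\sqrt s\}$. $K^{R,\Gamma}_{s_1,s_2}$ is the set of $Z\in\mathbb{R}^{n_1\times n_2}$ of the form $Z=\sum_{r=1}^R\sigma_ru^r(v^r)^T$ with $u^r\in K_{n_1,s_1}$, $v^r\in K_{n_2,s_2}$, $\|u^r\|_2=\|v^r\|_2=1$ for all $r$, and $\sigma\in\mathbb{R}^R$, $\|\sigma\|_2\le\Gamma$. *)

theory Defs
  imports "HOL-Analysis.Analysis"
begin

definition covering_number :: "'a::metric_space set \<Rightarrow> real \<Rightarrow> nat" where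
  "covering_number M eps = Inf {card C | C. finite C \<and> M \<subseteq> (\<Union>c\<in>C. cball c eps)}"

definition l1norm :: "real ^ 'n \<Rightarrow> real" where
  "l1norm z = (\<Sum>i\<in>UNIV. \<bar>z $ i\<bar>)"

definition Kns :: "real \<Rightarrow> (real ^ 'n) set" where
  "Kns s = {z. norm z \<le> 1 \<and> l1norm z \<le> sqrt s}"

definition outer :: "real ^ 'm \<Rightarrow> real ^ 'n \<Rightarrow> real ^ 'n ^ 'm" where
  "outer u v = (\<chi> i j. u $ i * v $ j)"

text \<open>K^{R,Gamma}_{s1,s2}.  The norm on real^'n^'m is the Frobenius norm.\<close>
definition KRG :: "nat \<Rightarrow> real \<Rightarrow> real \<Rightarrow> real \<Rightarrow> (real ^ 'n ^ 'm) set" where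
  "KRG R \<Gamma> s1 s2 = {Z. \<exists>\<sigma> (u :: nat \<Rightarrow> real ^ 'm) (v :: nat \<Rightarrow> real ^ 'n).
      Z = (\<Sum>r<R. \<sigma> r *\<^sub>R outer (u r) (v r)) \<and>
      (\<forall>r<R. u r \<in> Kns s1 \<and> v r \<in> Kns s2 \<and> norm (u r) = 1 \<and> norm (v r) = 1) \<and>
      sqrt (\<Sum>r<R. (\<sigma> r)\<^sup>2) \<le> \<Gamma>}"

end

theory Submission
  imports Defs
begin

text \<open>Each summand \<open>\<sigma>\<^sub>r u\<^sub>r v\<^sub>r\<^sup>T\<close> is perturbed separately: the coefficient vector \<open>\<sigma>\<close> is
  rounded to a grid of mesh \<open>\<epsilon>/(3R)\<close>, and \<open>u\<^sub>r\<close>, \<open>v\<^sub>r\<close> are replaced by nearby points of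
  \<open>\<delta>\<close>-nets of the unit vectors of \<open>K\<^sub>n\<^sub>1\<^sub>,\<^sub>s\<^sub>1\<close> and \<open>K\<^sub>n\<^sub>2\<^sub>,\<^sub>s\<^sub>2\<close>, with
  \<open>\<delta> = \<epsilon>/(5\<Gamma>\<surd>R)\<close>. The total error is at most \<open>\<epsilon>\<close>, so the covering number is at most
  the product of the sizes of the grid and of \<open>R\<close> copies of each net. A net of the unit
  vectors of \<open>K\<^sub>n\<^sub>,\<^sub>s\<close> can be taken either of volumetric size \<open>(3/\<delta>)\<^sup>n\<close>, or, by Maurey's
  empirical method, to consist of the averages of \<open>k \<approx> s/\<delta>\<^sup>2\<close> signed scaled basis vectors,
  of which there are at most \<open>C(2n+k-1, k)\<close>; the second choice is better exactly when
  \<open>\<epsilon> \<ge> 12\<Gamma>\<surd>(Rs/n)\<close>. For \<open>\<epsilon> \<ge> \<Gamma>\<surd>R\<close> the single ball around \<open>0\<close> suffices.\<close>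

section \<open>Covering numbers and volumetric nets\<close>

lemma covering_number_le:
  assumes "finite C" "M \<subseteq> (\<Union>c\<in>C. cball c eps)"
  shows "covering_number M eps \<le> card C"
  unfolding covering_number_def using assms by (intro cInf_lower) auto

lemma covering_number_attained:
  assumes "finite C" "M \<subseteq> (\<Union>c\<in>C. cball c eps)"
  obtains C' where "finite C'" "M \<subseteq> (\<Union>c\<in>C'. cball c eps)" "card C' = covering_number M eps"
proof -
  have "{card C | C. finite C \<and> M \<subseteq> (\<Union>c\<in>C. cball c eps)} \<noteq> {}"
    using assms by auto
  then have "covering_number M eps \<in> {card C | C. finite C \<and> M \<subseteq> (\<Union>c\<in>C. cball c eps)}"
    unfolding covering_number_def by (rule Inf_nat_def1)
  then show ?thesis using that by auto
qed

lemma disjoint_family_on_half_balls: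
  assumes "\<And>p q. p \<in> P \<Longrightarrow> q \<in> P \<Longrightarrow> p \<noteq> q \<Longrightarrow> \<delta> < dist p q"
  shows "disjoint_family_on (\<lambda>p. ball p (\<delta>/2)) P"
  unfolding disjoint_family_on_def
proof (intro ballI impI)
  fix p q assume "p \<in> P" "q \<in> P" "p \<noteq> q"
  then have "\<delta> < dist p q" by (rule assms)
  show "ball p (\<delta>/2) \<inter> ball q (\<delta>/2) = {}"
  proof (rule ccontr)
    assume "ball p (\<delta>/2) \<inter> ball q (\<delta>/2) \<noteq> {}"
    then obtain x where "dist p x < \<delta>/2" "dist q x < \<delta>/2" by auto
    then have "dist p q < \<delta>" using dist_triangle3[of p q x] by (simp add: dist_commute)
    with \<open>\<delta> < dist p q\<close> show False by simp
  qed
qed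

lemma card_separated_subset_cball_le:
  fixes P :: "'a::euclidean_space set"
  assumes "finite P" "P \<subseteq> cball 0 1" "\<delta> > 0"
    and separated: "\<And>p q. p \<in> P \<Longrightarrow> q \<in> P \<Longrightarrow> p \<noteq> q \<Longrightarrow> \<delta> < dist p q"
  shows "real (card P) \<le> ((2 + \<delta>) / \<delta>) ^ DIM('a)"
proof -
  let ?V = "unit_ball_vol (DIM('a))"
  have disjoint: "disjoint_family_on (\<lambda>p. ball p (\<delta>/2)) P"
    using separated by (rule disjoint_family_on_half_balls)
  have "real (card P) * (?V * (\<delta>/2) ^ DIM('a)) = (\<Sum>p\<in>P. measure lborel (ball p (\<delta>/2)))"
    using \<open>\<delta> > 0\<close> by (simp add: content_ball)
  also have "\<dots> = measure lborel (\<Union>p\<in>P. ball p (\<delta>/2))"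
    by (rule measure_finite_Union[symmetric])
       (use assms in \<open>auto simp: disjoint emeasure_ball[of "\<delta>/2"]\<close>)
  also have "\<dots> \<le> measure lborel (ball (0::'a) (1 + \<delta>/2))"
  proof (rule measure_mono_fmeasurable)
    show "(\<Union>p\<in>P. ball p (\<delta>/2)) \<subseteq> ball 0 (1 + \<delta>/2)"
    proof
      fix x assume "x \<in> (\<Union>p\<in>P. ball p (\<delta>/2))"
      then obtain p where "p \<in> P" "dist p x < \<delta>/2" by auto
      moreover have "norm p \<le> 1" using assms(2) \<open>p \<in> P\<close> by auto
      ultimately show "x \<in> ball 0 (1 + \<delta>/2)"
        using norm_triangle_ineq[of p "x - p"] by (simp add: dist_norm norm_minus_commute)
    qed
    show "(\<Union>p\<in>P. ball p (\<delta>/2)) \<in> sets lborel" by (simp add: borel_open open_UN)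
    show "ball (0::'a) (1 + \<delta>/2) \<in> fmeasurable lborel"
      using \<open>\<delta> > 0\<close> by (simp add: fmeasurable_def emeasure_ball[of "1+\<delta>/2"] borel_open)
  qed
  also have "\<dots> = ?V * (1 + \<delta>/2) ^ DIM('a)"
    using \<open>\<delta> > 0\<close> by (simp add: content_ball)
  finally have "real (card P) * (?V * (\<delta>/2) ^ DIM('a)) \<le> ?V * (1 + \<delta>/2) ^ DIM('a)" .
  then have "real (card P) * (\<delta>/2) ^ DIM('a) \<le> (1 + \<delta>/2) ^ DIM('a)"
    by (simp add: mult.left_commute)
  then have "real (card P) \<le> (1 + \<delta>/2) ^ DIM('a) / (\<delta>/2) ^ DIM('a)"
    using \<open>\<delta> > 0\<close> by (simp add: field_simps)
  also have "\<dots> = ((1 + \<delta>/2) / (\<delta>/2)) ^ DIM('a)"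
    by (rule power_divide[symmetric])
  also have "(1 + \<delta>/2) / (\<delta>/2) = (2 + \<delta>) / \<delta>"
    using \<open>\<delta> > 0\<close> by (simp add: field_simps)
  finally show ?thesis .
qed

text \<open>A maximal \<open>\<delta>\<close>-separated subset is a \<open>\<delta>\<close>-net.\<close>
lemma cball_net_exists:
  fixes S :: "'a::euclidean_space set"
  assumes "S \<subseteq> cball 0 1" "\<delta> > 0"
  obtains C where "finite C" "S \<subseteq> (\<Union>c\<in>C. cball c \<delta>)" "real (card C) \<le> ((2 + \<delta>) / \<delta>) ^ DIM('a)"
proof -
  define separated where
    "separated P \<longleftrightarrow> finite P \<and> P \<subseteq> S \<and> (\<forall>p\<in>P. \<forall>q\<in>P. p \<noteq> q \<longrightarrow> \<delta> < dist p q)" for P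
  let ?B = "((2 + \<delta>) / \<delta>) ^ DIM('a)"
  have card_le: "real (card P) \<le> ?B" if "separated P" for P
    using that assms by (intro card_separated_subset_cball_le) (auto simp: separated_def)
  have "\<forall>P. separated P \<longrightarrow> card P < nat \<lceil>?B\<rceil> + 1"
  proof (intro allI impI)
    fix P assume "separated P"
    then have "real (card P) \<le> ?B" by (rule card_le)
    then have "card P \<le> nat \<lceil>?B\<rceil>" by linarith
    then show "card P < nat \<lceil>?B\<rceil> + 1" by simp
  qed
  moreover have "separated {}" by (simp add: separated_def)
  ultimately obtain P where P: "separated P" and maximal: "\<And>P'. separated P' \<Longrightarrow> card P' \<le> card P"
    using ex_has_greatest_nat[of separated "{}" card] by blast
  have "S \<subseteq> (\<Union>c\<in>P. cball c \<delta>)"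
  proof
    fix x assume "x \<in> S"
    show "x \<in> (\<Union>c\<in>P. cball c \<delta>)"
    proof (rule ccontr)
      assume "x \<notin> (\<Union>c\<in>P. cball c \<delta>)"
      then have far: "\<forall>c\<in>P. \<delta> < dist x c" by (auto simp: dist_commute)
      then have "x \<notin> P" using \<open>\<delta> > 0\<close> by force
      have "separated (insert x P)"
        using P far \<open>x \<in> S\<close> by (auto simp: separated_def dist_commute)
      then have "card (insert x P) \<le> card P" by (rule maximal)
      with \<open>x \<notin> P\<close> P show False by (simp add: separated_def)
    qed
  qed
  moreover have "finite P" using P by (simp add: separated_def)
  ultimately show ?thesis using that card_le[OF P] by blast
qed

lemma minimal_cball_net_exists:
  fixes S :: "'a::euclidean_space set"
  assumes "S \<subseteq> cball 0 1" "0 < \<delta>"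
  obtains C where "finite C" "S \<subseteq> (\<Union>c\<in>C. cball c \<delta>)" "card C = covering_number S \<delta>"
proof -
  obtain C0 where "finite C0" "S \<subseteq> (\<Union>c\<in>C0. cball c \<delta>)"
    and "real (card C0) \<le> ((2 + \<delta>) / \<delta>) ^ DIM('a)"
    using cball_net_exists[OF assms] .
  from covering_number_attained[OF this(1,2)] that show ?thesis .
qed

lemma covering_number_cball_le:
  fixes S :: "'a::euclidean_space set"
  assumes "S \<subseteq> cball 0 1" "0 < \<delta>" "\<delta> \<le> 1"
  shows "real (covering_number S \<delta>) \<le> (3 / \<delta>) ^ DIM('a)"
proof -
  obtain C where "finite C" "S \<subseteq> (\<Union>c\<in>C. cball c \<delta>)" and card: "real (card C) \<le> ((2 + \<delta>) / \<delta>) ^ DIM('a)"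
    using cball_net_exists[OF assms(1,2)] .
  then have "covering_number S \<delta> \<le> card C" by (intro covering_number_le)
  then have "real (covering_number S \<delta>) \<le> ((2 + \<delta>) / \<delta>) ^ DIM('a)"
    using card by linarith
  also have "\<dots> \<le> (3 / \<delta>) ^ DIM('a)"
    using assms(2,3) by (intro power_mono divide_right_mono) auto
  finally show ?thesis .
qed

lemma choose_net_points:
  assumes "S \<subseteq> (\<Union>c\<in>C. cball c \<delta>)" "\<And>r. r < R \<Longrightarrow> x r \<in> S"
  obtains x' where "\<And>r. r < R \<Longrightarrow> x' r \<in> C \<and> dist (x r) (x' r) \<le> \<delta>"
proof -
  have "\<exists>c. c \<in> C \<and> dist (x r) c \<le> \<delta>" if "r \<in> {..<R}" for r
  proof -
    have "x r \<in> S" using assms(2) that by simp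
    then have "x r \<in> (\<Union>c\<in>C. cball c \<delta>)" by (rule subsetD[OF assms(1)])
    then show ?thesis by (auto simp: dist_commute)
  qed
  then have "\<forall>r\<in>{..<R}. \<exists>c. c \<in> C \<and> dist (x r) c \<le> \<delta>" ..
  from bchoice[OF this] obtain x' where "\<forall>r\<in>{..<R}. x' r \<in> C \<and> dist (x r) (x' r) \<le> \<delta>" ..
  then show ?thesis by (intro that[of x']) simp
qed

section \<open>Sparse nets by Maurey's empirical method\<close>

lemma exists_le_weighted_average:
  fixes f p :: "'i \<Rightarrow> real"
  assumes "finite I" "\<And>i. i \<in> I \<Longrightarrow> 0 \<le> p i" "sum p I = 1"
    and "(\<Sum>i\<in>I. p i * f i) \<le> c"
  shows "\<exists>i\<in>I. f i \<le> c"
proof (rule ccontr)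
  assume "\<not> (\<exists>i\<in>I. f i \<le> c)"
  then have gt: "\<And>i. i \<in> I \<Longrightarrow> c < f i" by auto
  have "(\<Sum>i\<in>I. p i * c) < (\<Sum>i\<in>I. p i * f i)"
  proof (rule sum_strict_mono_ex1)
    show "\<forall>i\<in>I. p i * c \<le> p i * f i"
      using assms(2) gt by (simp add: less_imp_le mult_left_mono)
    have "\<exists>i\<in>I. p i \<noteq> 0"
    proof (rule ccontr)
      assume "\<not> (\<exists>i\<in>I. p i \<noteq> 0)"
      then have "sum p I = 0" by simp
      with \<open>sum p I = 1\<close> show False by simp
    qed
    then obtain i where "i \<in> I" "p i \<noteq> 0" ..
    have "0 < p i" using assms(2) \<open>i \<in> I\<close> \<open>p i \<noteq> 0\<close> by (simp add: order_le_neq_trans)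
    then have "p i * c < p i * f i" using gt[OF \<open>i \<in> I\<close>] by simp
    with \<open>i \<in> I\<close> show "\<exists>i\<in>I. p i * c < p i * f i" ..
  qed (rule assms(1))
  with assms(3,4) show False by (simp flip: sum_distrib_right)
qed

lemma weighted_sum_norm_shift:
  fixes x :: "'i \<Rightarrow> 'a::real_inner"
  assumes total: "sum p I = 1" and mean: "(\<Sum>i\<in>I. p i *\<^sub>R x i) = u"
  shows "(\<Sum>i\<in>I. p i * (norm (D + (x i - u)))\<^sup>2)
    = (norm D)\<^sup>2 + ((\<Sum>i\<in>I. p i * (norm (x i))\<^sup>2) - (norm u)\<^sup>2)"
proof -
  have centred: "(\<Sum>i\<in>I. p i *\<^sub>R (x i - u)) = 0"
    using mean total by (simp add: scaleR_diff_right sum_subtractf flip: scaleR_sum_left)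
  have "(\<Sum>i\<in>I. p i * (norm (x i - u))\<^sup>2)
      = (\<Sum>i\<in>I. p i * (norm (x i))\<^sup>2 - 2 * inner (p i *\<^sub>R x i) u + p i * (norm u)\<^sup>2)"
    by (intro sum.cong refl)
       (simp add: power2_norm_eq_inner inner_diff_left inner_diff_right inner_commute algebra_simps)
  also have "\<dots> = (\<Sum>i\<in>I. p i * (norm (x i))\<^sup>2) - 2 * inner (\<Sum>i\<in>I. p i *\<^sub>R x i) u
                  + (\<Sum>i\<in>I. p i) * (norm u)\<^sup>2"
    by (simp add: sum.distrib sum_subtractf inner_sum_left sum_distrib_left sum_distrib_right)
  finally have variance: "(\<Sum>i\<in>I. p i * (norm (x i - u))\<^sup>2)
      = (\<Sum>i\<in>I. p i * (norm (x i))\<^sup>2) - (norm u)\<^sup>2"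
    using mean total by (simp add: power2_norm_eq_inner)
  have "(\<Sum>i\<in>I. p i * (norm (D + (x i - u)))\<^sup>2)
      = (\<Sum>i\<in>I. p i * (norm D)\<^sup>2 + 2 * inner D (p i *\<^sub>R (x i - u)) + p i * (norm (x i - u))\<^sup>2)"
    by (intro sum.cong refl)
       (simp add: power2_norm_eq_inner inner_add_left inner_add_right inner_commute algebra_simps)
  also have "\<dots> = (\<Sum>i\<in>I. p i) * (norm D)\<^sup>2 + 2 * inner D (\<Sum>i\<in>I. p i *\<^sub>R (x i - u))
                  + (\<Sum>i\<in>I. p i * (norm (x i - u))\<^sup>2)"
    by (simp add: sum.distrib inner_sum_right sum_distrib_left sum_distrib_right)
  finally show ?thesis using total centred variance by simp
qed

text \<open>Maurey's empirical method: with each further draw the expected squared error grows by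
  at most \<open>s\<close>, because the cross term averages to zero.\<close>
lemma empirical_approximation:
  fixes x :: "'i \<Rightarrow> 'a::real_inner"
  assumes fin: "finite I" and nonneg: "\<And>i. i \<in> I \<Longrightarrow> 0 \<le> p i" and total: "sum p I = 1"
    and mean: "(\<Sum>i\<in>I. p i *\<^sub>R x i) = u" and moment: "(\<Sum>i\<in>I. p i * (norm (x i))\<^sup>2) \<le> s"
  shows "\<exists>M. size M = k \<and> set_mset M \<subseteq> x ` I \<and> (norm (sum_mset M - real k *\<^sub>R u))\<^sup>2 \<le> real k * s"
proof (induction k)
  case 0
  show ?case by (intro exI[of _ "{#}"]) simp
next
  case (Suc k)
  then obtain M where M: "size M = k" "set_mset M \<subseteq> x ` I"
      and err: "(norm (sum_mset M - real k *\<^sub>R u))\<^sup>2 \<le> real k * s"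
    by blast
  define D where "D = sum_mset M - real k *\<^sub>R u"
  have "(\<Sum>i\<in>I. p i * (norm (D + (x i - u)))\<^sup>2)
      = (norm D)\<^sup>2 + ((\<Sum>i\<in>I. p i * (norm (x i))\<^sup>2) - (norm u)\<^sup>2)"
    using total mean by (rule weighted_sum_norm_shift)
  also have "\<dots> \<le> real k * s + s"
    using moment err zero_le_power2[of "norm u"] unfolding D_def by linarith
  finally have average: "(\<Sum>i\<in>I. p i * (norm (D + (x i - u)))\<^sup>2) \<le> real k * s + s" .
  have "\<exists>i\<in>I. (norm (D + (x i - u)))\<^sup>2 \<le> real k * s + s"
    using fin nonneg total average by (rule exists_le_weighted_average)
  then obtain i where i: "i \<in> I" "(norm (D + (x i - u)))\<^sup>2 \<le> real k * s + s" ..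
  have "sum_mset (add_mset (x i) M) - real (Suc k) *\<^sub>R u = D + (x i - u)"
    by (simp add: D_def algebra_simps)
  then show ?case using i M
    by (intro exI[of _ "add_mset (x i) M"]) (auto simp: algebra_simps)
qed

definition signed_basis :: "real \<Rightarrow> (real ^ 'n) set" where
  "signed_basis s = range (\<lambda>(i, b). (if b then sqrt s else - sqrt s) *\<^sub>R axis i 1)"

lemma finite_signed_basis: "finite (signed_basis s :: (real ^ 'n) set)"
  by (simp add: signed_basis_def)

lemma card_signed_basis_le: "card (signed_basis s :: (real ^ 'n) set) \<le> 2 * CARD('n)"
proof -
  have "card (signed_basis s :: (real ^ 'n) set) \<le> card (UNIV :: ('n \<times> bool) set)"
    unfolding signed_basis_def by (rule card_image_le) simp
  then show ?thesis by (simp add: card_UNIV_bool)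
qed

lemma sum_UNIV_prod_bool:
  "(\<Sum>ib\<in>UNIV. g ib) = (\<Sum>i\<in>(UNIV :: 'n::finite set). g (i, True) + g (i, False))"
proof -
  have "(\<Sum>ib\<in>UNIV. g ib) = (\<Sum>ib\<in>(UNIV :: 'n set) \<times> (UNIV :: bool set). g ib)"
    by simp
  also have "\<dots> = (\<Sum>i\<in>UNIV. \<Sum>b\<in>UNIV. g (i, b))"
    unfolding sum.cartesian_product by simp
  finally show ?thesis by (simp add: UNIV_bool add.commute)
qed

text \<open>A vector of \<open>\<ell>\<^sub>1\<close>-norm at most \<open>\<surd>s\<close> is a convex combination of the points
  \<open>\<plusminus>\<surd>s e\<^sub>i\<close>; the mass \<open>1 - \<parallel>u\<parallel>\<^sub>1/\<surd>s\<close> left over is split evenly between \<open>\<plusminus>\<surd>s e\<^sub>i\<^sub>0\<close>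
  for an arbitrary index \<open>i\<^sub>0\<close>, where it cancels.\<close>
lemma l1_ball_empirical_approximation:
  fixes u :: "real ^ 'n"
  assumes l1: "l1norm u \<le> sqrt s" and "0 < s"
  shows "\<exists>M. size M = k \<and> set_mset M \<subseteq> signed_basis s
           \<and> (norm (sum_mset M - real k *\<^sub>R u))\<^sup>2 \<le> real k * s"
proof -
  define c where "c = sqrt s"
  have c: "0 < c" using \<open>0 < s\<close> by (simp add: c_def)
  define i0 :: 'n where "i0 = undefined"
  define r where "r = (1 - l1norm u / c) / 2"
  define x :: "'n \<times> bool \<Rightarrow> real ^ 'n" where "x = (\<lambda>(i, b). (if b then c else - c) *\<^sub>R axis i 1)"
  define p :: "'n \<times> bool \<Rightarrow> real" where
    "p = (\<lambda>(i, b). (if b then max (u $ i) 0 else max (- u $ i) 0) / c + (if i = i0 then r else 0))"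
  have "0 \<le> r" using l1 c by (simp add: r_def c_def field_simps)
  then have nonneg: "0 \<le> p ib" for ib using c by (cases ib) (auto simp: p_def)
  have "sum p UNIV = (\<Sum>i\<in>UNIV. \<bar>u $ i\<bar> / c + (if i = i0 then 2 * r else 0))"
    unfolding sum_UNIV_prod_bool by (intro sum.cong refl) (auto simp: p_def add_divide_distrib[symmetric])
  also have "\<dots> = l1norm u / c + 2 * r"
    by (simp add: sum.distrib l1norm_def sum_divide_distrib)
  also have "\<dots> = 1" using c by (simp add: r_def field_simps)
  finally have total: "sum p UNIV = 1" .
  have "(\<Sum>ib\<in>UNIV. p ib *\<^sub>R x ib) = (\<Sum>i\<in>UNIV. u $ i *\<^sub>R axis i 1)"
    unfolding sum_UNIV_prod_bool
  proof (intro sum.cong refl)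
    fix i
    have "max (u $ i) 0 - max (- u $ i) 0 = u $ i" by simp
    then show "p (i, True) *\<^sub>R x (i, True) + p (i, False) *\<^sub>R x (i, False) = u $ i *\<^sub>R axis i 1"
      using c by (auto simp: p_def x_def algebra_simps divide_simps simp flip: scaleR_add_left)
  qed
  also have "\<dots> = u" using basis_expansion[of u] by (simp add: scalar_mult_eq_scaleR)
  finally have mean: "(\<Sum>ib\<in>UNIV. p ib *\<^sub>R x ib) = u" .
  have "(\<Sum>ib\<in>UNIV. p ib * (norm (x ib))\<^sup>2) = (\<Sum>ib\<in>UNIV. p ib * s)"
    using \<open>0 < s\<close> by (intro sum.cong refl) (auto simp: x_def c_def split: if_splits)
  then have moment: "(\<Sum>ib\<in>UNIV. p ib * (norm (x ib))\<^sup>2) \<le> s"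
    using total by (simp flip: sum_distrib_right)
  have "x ` UNIV = signed_basis s" unfolding x_def signed_basis_def c_def by simp
  then show ?thesis using empirical_approximation[OF _ nonneg total mean moment, of k] by simp
qed

lemma covering_number_l1_ball_le:
  fixes S :: "(real ^ 'n) set"
  assumes S: "\<And>u. u \<in> S \<Longrightarrow> l1norm u \<le> sqrt s" and "0 < s" "0 < \<delta>" "1 \<le> k" "s \<le> real k * \<delta>\<^sup>2"
  shows "covering_number S \<delta> \<le> (2 * CARD('n) + k - 1) choose k"
proof -
  define C where "C = (\<lambda>M. (1 / real k) *\<^sub>R sum_mset M) ` multisets_of_size (signed_basis s :: (real ^ 'n) set) k"
  have fin: "finite (multisets_of_size (signed_basis s :: (real ^ 'n) set) k)"
    by (simp add: finite_multisets_of_size finite_signed_basis)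
  have "S \<subseteq> (\<Union>c\<in>C. cball c \<delta>)"
  proof
    fix u assume "u \<in> S"
    then obtain M where M: "size M = k" "set_mset M \<subseteq> signed_basis s"
        and err: "(norm (sum_mset M - real k *\<^sub>R u))\<^sup>2 \<le> real k * s"
      using l1_ball_empirical_approximation[of u s k] S \<open>0 < s\<close> by blast
    define c where "c = (1 / real k) *\<^sub>R sum_mset M"
    have k: "0 < real k" using \<open>1 \<le> k\<close> by simp
    have "(norm (c - u))\<^sup>2 = (norm (sum_mset M - real k *\<^sub>R u))\<^sup>2 / (real k)\<^sup>2"
    proof -
      have "c - u = (1 / real k) *\<^sub>R (sum_mset M - real k *\<^sub>R u)"
        using k by (simp add: c_def algebra_simps)
      then show ?thesis using k by (simp add: power_divide)
    qed
    also have "\<dots> \<le> real k * s / (real k)\<^sup>2"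
      using err k by (simp add: divide_right_mono)
    also have "\<dots> = s / real k" using k by (simp add: power2_eq_square)
    also have "\<dots> \<le> \<delta>\<^sup>2" using k \<open>s \<le> real k * \<delta>\<^sup>2\<close> by (simp add: divide_simps mult.commute)
    finally have "dist c u \<le> \<delta>"
      using \<open>0 < \<delta>\<close> by (simp add: dist_norm power2_le_iff_abs_le)
    moreover have "c \<in> C" using M by (auto simp: C_def c_def multisets_of_size_def)
    ultimately show "u \<in> (\<Union>c\<in>C. cball c \<delta>)" by auto
  qed
  then have "covering_number S \<delta> \<le> card C"
    using fin by (intro covering_number_le) (simp_all add: C_def)
  also have "\<dots> \<le> card (multisets_of_size (signed_basis s :: (real ^ 'n) set) k)"
    unfolding C_def using fin by (rule card_image_le)
  also have "\<dots> = (card (signed_basis s :: (real ^ 'n) set) + k - 1) choose k"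
    by (simp add: card_multisets_of_size finite_signed_basis)
  also have "\<dots> \<le> (2 * CARD('n) + k - 1) choose k"
    using card_signed_basis_le[where 'n='n, of s] by (intro binomial_right_mono) simp
  finally show ?thesis .
qed

lemma power_div_fact_le_exp: "real k ^ k / fact k \<le> exp (real k)"
proof -
  have "(\<Sum>n\<in>{k}. real k ^ n /\<^sub>R fact n) \<le> (\<Sum>n. real k ^ n /\<^sub>R fact n)"
    by (rule sum_le_suminf) (auto simp: summable_exp)
  then show ?thesis by (simp add: exp_def divide_inverse_commute)
qed

lemma ln_binomial_le:
  assumes "1 \<le> k" "k \<le> N"
  shows "ln (real (N choose k)) \<le> real k * (1 + ln (real N / real k))"
proof -
  have "real (N choose k) * fact k \<le> real N ^ k"
    using binomial_fact_pow[of N k] by (metis of_nat_fact of_nat_le_iff of_nat_mult of_nat_power)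
  then have "real (N choose k) \<le> real N ^ k / fact k" by (simp add: field_simps)
  also have "\<dots> = (real N / real k) ^ k * (real k ^ k / fact k)"
    using assms(1) by (simp add: power_divide)
  also have "\<dots> \<le> (real N / real k) ^ k * exp (real k)"
    by (intro mult_left_mono power_div_fact_le_exp) simp
  finally have "ln (real (N choose k)) \<le> ln ((real N / real k) ^ k * exp (real k))"
    using assms by simp
  also have "\<dots> = real k * ln (real N / real k) + real k"
    using assms by (simp add: ln_mult ln_realpow)
  finally show ?thesis by (simp add: algebra_simps)
qed

lemma four_le_ln:
  fixes y :: real
  assumes "144 \<le> y"
  shows "4 \<le> ln y"
proof -
  have "exp (1::real) ^ 4 \<le> 3 ^ 4" using exp_le by (intro power_mono) auto
  then have "exp 4 \<le> y" using assms by (simp flip: exp_of_nat_mult)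
  moreover have "0 < y" using assms by simp
  ultimately show ?thesis by (simp add: ln_ge_iff)
qed

text \<open>With \<open>x = s/a\<^sup>2\<close> and \<open>k \<approx> 25 x\<close>, the bound \<open>k (1 + ln ((2n + k - 1)/k))\<close> is at most
  \<open>26 x (1 + ln y)\<close> for \<open>y = n/x \<ge> 144\<close>, and \<open>1 + ln y \<le> (144/26) ln y\<close> because \<open>ln y \<ge> 4\<close>.\<close>
lemma ln_binomial_sparse_le:
  fixes a s L :: real and n :: nat
  assumes a: "0 < a" "a \<le> 1" and s: "1 \<le> s"
    and large: "144 \<le> real n * a\<^sup>2 / s" and L: "ln (real n * a\<^sup>2 / s) \<le> L"
  defines "k \<equiv> nat \<lceil>25 * s / a\<^sup>2\<rceil>"
  shows "ln (real ((2 * n + k - 1) choose k)) \<le> 144 * (s / a\<^sup>2) * L"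
proof -
  define x where "x = s / a\<^sup>2"
  define y where "y = real n * a\<^sup>2 / s"
  have "0 < a\<^sup>2" "a\<^sup>2 \<le> 1" using a by (auto simp: power_le_one)
  then have x1: "1 \<le> x" using s by (simp add: x_def field_simps)
  have k25: "25 * x \<le> real k" and k26: "real k \<le> 26 * x"
    using x1 unfolding k_def x_def by linarith+
  then have k: "1 \<le> k" using x1 by linarith
  have yx: "y = real n / x" using \<open>0 < a\<^sup>2\<close> s by (simp add: y_def x_def field_simps)
  have ln_y: "4 \<le> ln y" using large unfolding y_def[symmetric] by (rule four_le_ln)
  have "1 \<le> n" using large yx x1 by (cases n) (auto simp: y_def)
  then have kN: "k \<le> 2 * n + k - 1" by simp
  have "real (2 * n + k - 1) / real k \<le> y"
  proof -
    have "real (2 * n + k - 1) / real k \<le> (2 * real n + real k) / real k"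
      using k by (intro divide_right_mono) auto
    also have "\<dots> = 2 * real n / real k + 1" using k by (simp add: field_simps)
    also have "\<dots> \<le> 2 * real n / (25 * x) + 1"
      using k k25 x1 by (intro add_right_mono divide_left_mono) auto
    also have "\<dots> = 2 / 25 * y + 1" using yx x1 by simp
    also have "\<dots> \<le> y" using large unfolding y_def[symmetric] by linarith
    finally show ?thesis .
  qed
  then have "ln (real (2 * n + k - 1) / real k) \<le> ln y"
    using k kN by (intro ln_mono) auto
  then have "real k * (1 + ln (real (2 * n + k - 1) / real k)) \<le> real k * (1 + ln y)"
    by (intro mult_left_mono) auto
  with ln_binomial_le[OF k kN] have "ln (real ((2 * n + k - 1) choose k)) \<le> real k * (1 + ln y)"
    by linarith
  also have "\<dots> \<le> 26 * x * (1 + ln y)"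
    using k26 ln_y by (intro mult_right_mono) auto
  also have "\<dots> \<le> x * (144 * L)"
  proof -
    have "26 * (1 + ln y) \<le> 144 * L" using ln_y L by (simp add: y_def)
    then show ?thesis using x1 by (simp add: mult_left_mono)
  qed
  finally show ?thesis by (simp add: x_def mult_ac)
qed

lemma covering_number_sparse_le:
  fixes S :: "(real ^ 'n) set" and a s L :: real
  assumes S: "\<And>u. u \<in> S \<Longrightarrow> l1norm u \<le> sqrt s" and a: "0 < a" "a \<le> 1" and s: "1 \<le> s"
    and large: "144 \<le> real CARD('n) * a\<^sup>2 / s" and L: "ln (real CARD('n) * a\<^sup>2 / s) \<le> L"
  shows "real (covering_number S (a / 5)) \<le> exp (144 * (s / a\<^sup>2) * L)"
proof -
  define k where "k = nat \<lceil>25 * s / a\<^sup>2\<rceil>"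
  have k: "25 * s / a\<^sup>2 \<le> real k" unfolding k_def by (rule real_nat_ceiling_ge)
  then have "s \<le> real k * (a / 5)\<^sup>2"
    using a by (simp add: power_divide field_simps)
  moreover have "1 \<le> k"
  proof -
    have "a\<^sup>2 \<le> 1" using a by (simp add: power_le_one)
    then have "1 \<le> 25 * s / a\<^sup>2" using a s by (simp add: field_simps)
    then show ?thesis using k by linarith
  qed
  ultimately have "covering_number S (a / 5) \<le> (2 * CARD('n) + k - 1) choose k"
    using S a s by (intro covering_number_l1_ball_le) auto
  then have "real (covering_number S (a / 5)) \<le> real ((2 * CARD('n) + k - 1) choose k)"
    by linarith
  also have "\<dots> = exp (ln (real ((2 * CARD('n) + k - 1) choose k)))"
  proof -
    have "0 < CARD('n)" by simp
    then have "k \<le> 2 * CARD('n) + k - 1" by linarith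
    then show ?thesis by (subst exp_ln) (simp_all add: zero_less_binomial del: One_nat_def)
  qed
  also have "\<dots> \<le> exp (144 * (s / a\<^sup>2) * L)"
    unfolding k_def exp_le_cancel_iff by (rule ln_binomial_sparse_le[OF a s large L])
  finally show ?thesis .
qed

section \<open>Nets for sums of rank-one matrices\<close>

lemma norm_outer: "norm (outer u v) = norm u * norm v"
proof -
  have "outer u v = (\<chi> i. u $ i *\<^sub>R v)" by (simp add: outer_def vec_eq_iff)
  then have "norm (outer u v) = L2_set (\<lambda>i. norm (u $ i *\<^sub>R v)) UNIV"
    by (simp add: norm_vec_def)
  also have "\<dots> = L2_set (\<lambda>i. norm v * \<bar>u $ i\<bar>) UNIV"
    by (simp add: mult.commute)
  also have "\<dots> = norm v * norm u"
    by (simp add: L2_set_right_distrib[symmetric] norm_vec_def[of u])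
  finally show ?thesis by simp
qed

lemma outer_diff_left: "outer (u - u') v = outer u v - outer u' v"
  by (simp add: outer_def vec_eq_iff algebra_simps)

lemma outer_diff_right: "outer u (v - v') = outer u v - outer u v'"
  by (simp add: outer_def vec_eq_iff algebra_simps)

lemma norm_rank_one_diff_le:
  fixes u u' :: "real ^ 'm" and v v' :: "real ^ 'n"
  assumes "norm u = 1" "norm v = 1" "norm (u - u') \<le> d1" "norm (v - v') \<le> d2"
  shows "norm (a *\<^sub>R outer u v - b *\<^sub>R outer u' v') \<le> \<bar>a - b\<bar> + \<bar>b\<bar> * (d1 + (1 + d1) * d2)"
proof -
  have "norm u' \<le> 1 + d1" using assms(1,3) norm_triangle_sub[of u' u] by (simp add: norm_minus_commute)
  moreover have "0 \<le> 1 + d1" using calculation norm_ge_zero[of u'] by linarith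
  ultimately have "norm (outer u' (v - v')) \<le> (1 + d1) * d2"
    unfolding norm_outer using assms(4) by (intro mult_mono) auto
  moreover have "norm (outer (u - u') v) \<le> d1" using assms by (simp add: norm_outer)
  ultimately have "norm (outer (u - u') v + outer u' (v - v')) \<le> d1 + (1 + d1) * d2"
    using norm_triangle_ineq[of "outer (u - u') v" "outer u' (v - v')"] by linarith
  then have "norm (b *\<^sub>R (outer (u - u') v + outer u' (v - v'))) \<le> \<bar>b\<bar> * (d1 + (1 + d1) * d2)"
    by (simp add: mult_left_mono)
  moreover have "norm ((a - b) *\<^sub>R outer u v) = \<bar>a - b\<bar>" using assms(1,2) by (simp add: norm_outer)
  moreover have split: "a *\<^sub>R outer u v - b *\<^sub>R outer u' v'
      = (a - b) *\<^sub>R outer u v + b *\<^sub>R (outer (u - u') v + outer u' (v - v'))"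
    by (simp add: outer_diff_left outer_diff_right algebra_simps)
  ultimately show ?thesis
    using norm_triangle_ineq[of "(a - b) *\<^sub>R outer u v" "b *\<^sub>R (outer (u - u') v + outer u' (v - v'))"]
    unfolding split by linarith
qed

lemma sum_abs_le_sqrt_sum_squares:
  fixes \<sigma> :: "nat \<Rightarrow> real"
  shows "(\<Sum>r<R. \<bar>\<sigma> r\<bar>) \<le> sqrt (real R) * sqrt (\<Sum>r<R. (\<sigma> r)\<^sup>2)"
proof -
  have "(\<Sum>r<R. \<bar>\<sigma> r\<bar>)\<^sup>2 \<le> real R * (\<Sum>r<R. (\<sigma> r)\<^sup>2)"
    using sum_squared_le_sum_of_squares[of "\<lambda>r. \<bar>\<sigma> r\<bar>" "{..<R}"] by (simp add: mult.commute)
  then show ?thesis by (simp add: real_le_rsqrt flip: real_sqrt_mult)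
qed

lemma KRG_norm_le:
  assumes "Z \<in> KRG R \<Gamma> s1 s2"
  shows "norm Z \<le> sqrt (real R) * \<Gamma>"
proof -
  obtain \<sigma> u v where Z: "Z = (\<Sum>r<R. \<sigma> r *\<^sub>R outer (u r) (v r))"
      and unit: "\<forall>r<R. norm (u r) = 1 \<and> norm (v r) = 1" and \<sigma>: "sqrt (\<Sum>r<R. (\<sigma> r)\<^sup>2) \<le> \<Gamma>"
    using assms unfolding KRG_def by blast
  have "norm Z \<le> (\<Sum>r<R. norm (\<sigma> r *\<^sub>R outer (u r) (v r)))" unfolding Z by (rule norm_sum)
  also have "\<dots> = (\<Sum>r<R. \<bar>\<sigma> r\<bar>)" using unit by (intro sum.cong refl) (simp add: norm_outer)
  also have "\<dots> \<le> sqrt (real R) * sqrt (\<Sum>r<R. (\<sigma> r)\<^sup>2)" by (rule sum_abs_le_sqrt_sum_squares)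
  also have "\<dots> \<le> sqrt (real R) * \<Gamma>" using \<sigma> by (intro mult_left_mono) auto
  finally show ?thesis .
qed

lemma ln_covering_number_KRG_nonpos:
  assumes "sqrt (real R) * \<Gamma> \<le> \<epsilon>"
  shows "ln (real (covering_number (KRG R \<Gamma> s1 s2 :: (real ^ 'n ^ 'm) set) \<epsilon>)) \<le> 0"
proof -
  have "KRG R \<Gamma> s1 s2 \<subseteq> (\<Union>c\<in>{0 :: real ^ 'n ^ 'm}. cball c \<epsilon>)"
  proof
    fix Z :: "real ^ 'n ^ 'm" assume "Z \<in> KRG R \<Gamma> s1 s2"
    then have "norm Z \<le> sqrt (real R) * \<Gamma>" by (rule KRG_norm_le)
    with assms show "Z \<in> (\<Union>c\<in>{0}. cball c \<epsilon>)" by simp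
  qed
  then have "covering_number (KRG R \<Gamma> s1 s2 :: (real ^ 'n ^ 'm) set) \<epsilon> \<le> card {0 :: real ^ 'n ^ 'm}"
    by (intro covering_number_le) simp_all
  then show ?thesis by (cases "covering_number (KRG R \<Gamma> s1 s2 :: (real ^ 'n ^ 'm) set) \<epsilon>") auto
qed

text \<open>Rounding down to the grid \<open>h \<int>\<close>.\<close>
lemma interval_grid_exists:
  assumes "0 < h" "0 \<le> \<Gamma>"
  obtains grid where "finite grid" "real (card grid) \<le> 2 * \<Gamma> / h + 2"
    "{x. \<bar>x\<bar> \<le> \<Gamma>} \<subseteq> (\<Union>y\<in>grid. cball y h)"
proof
  define lo where "lo = \<lfloor>- \<Gamma> / h\<rfloor>"
  define hi where "hi = \<lfloor>\<Gamma> / h\<rfloor>"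
  define grid where "grid = (\<lambda>j. h * real_of_int j) ` {lo..hi}"
  show "finite grid" unfolding grid_def by simp
  have "real (card grid) \<le> real (nat (hi - lo + 1))"
    unfolding grid_def using card_image_le[of "{lo..hi}"] by simp
  also have "\<dots> \<le> 2 * \<Gamma> / h + 2"
  proof -
    have "real_of_int hi \<le> \<Gamma> / h" "- \<Gamma> / h - 1 < real_of_int lo"
      unfolding lo_def hi_def by linarith+
    moreover have "0 \<le> \<Gamma> / h" using assms by simp
    ultimately show ?thesis by (cases "0 \<le> hi - lo + 1") (simp_all add: of_nat_nat)
  qed
  finally show "real (card grid) \<le> 2 * \<Gamma> / h + 2" .
  show "{x. \<bar>x\<bar> \<le> \<Gamma>} \<subseteq> (\<Union>y\<in>grid. cball y h)"
  proof
    fix x :: real assume "x \<in> {x. \<bar>x\<bar> \<le> \<Gamma>}"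
    then have "- \<Gamma> / h \<le> x / h" "x / h \<le> \<Gamma> / h"
      using assms divide_right_mono[of "- \<Gamma>" x h] divide_right_mono[of x \<Gamma> h] by auto
    then have "lo \<le> \<lfloor>x / h\<rfloor>" "\<lfloor>x / h\<rfloor> \<le> hi"
      unfolding lo_def hi_def by (auto intro: floor_mono)
    then have "h * real_of_int \<lfloor>x / h\<rfloor> \<in> grid" unfolding grid_def by auto
    moreover have "h * real_of_int \<lfloor>x / h\<rfloor> \<le> x" "x < h * real_of_int \<lfloor>x / h\<rfloor> + h"
      using assms(1) floor_divide_lower[of h x] floor_divide_upper[of h x]
      by (simp_all add: algebra_simps)
    ultimately show "x \<in> (\<Union>y\<in>grid. cball y h)" by (force simp: dist_real_def)
  qed
qed

lemma coefficient_grid_exists: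
  assumes "0 < h" "0 \<le> \<Gamma>"
  obtains G where "finite G" "real (card G) \<le> (2 * \<Gamma> / h + 2) ^ R"
    "\<And>\<sigma>. sqrt (\<Sum>r<R. (\<sigma> r)\<^sup>2) \<le> \<Gamma> \<Longrightarrow>
       \<exists>\<sigma>'\<in>G. (\<Sum>r<R. \<bar>\<sigma> r - \<sigma>' r\<bar>) \<le> real R * h \<and> (\<Sum>r<R. \<bar>\<sigma>' r\<bar>) \<le> sqrt (real R) * \<Gamma> + real R * h"
proof -
  obtain grid where "finite grid" and card_grid: "real (card grid) \<le> 2 * \<Gamma> / h + 2"
    and grid: "{x. \<bar>x\<bar> \<le> \<Gamma>} \<subseteq> (\<Union>y\<in>grid. cball y h)"
    using interval_grid_exists[OF assms] .
  define G where "G = PiE {..<R} (\<lambda>_. grid)"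
  have "finite G" unfolding G_def using \<open>finite grid\<close> by (simp add: finite_PiE)
  moreover have "real (card G) \<le> (2 * \<Gamma> / h + 2) ^ R"
    unfolding G_def using card_grid by (simp add: card_PiE power_mono)
  moreover have "\<exists>\<sigma>'\<in>G. (\<Sum>r<R. \<bar>\<sigma> r - \<sigma>' r\<bar>) \<le> real R * h
      \<and> (\<Sum>r<R. \<bar>\<sigma>' r\<bar>) \<le> sqrt (real R) * \<Gamma> + real R * h"
    if \<sigma>: "sqrt (\<Sum>r<R. (\<sigma> r)\<^sup>2) \<le> \<Gamma>" for \<sigma> :: "nat \<Rightarrow> real"
  proof -
    have "\<sigma> r \<in> {x. \<bar>x\<bar> \<le> \<Gamma>}" if "r < R" for r
    proof -
      have "(\<sigma> r)\<^sup>2 \<le> (\<Sum>r<R. (\<sigma> r)\<^sup>2)" using that by (intro member_le_sum) auto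
      then have "\<bar>\<sigma> r\<bar> \<le> sqrt (\<Sum>r<R. (\<sigma> r)\<^sup>2)" by (simp add: real_le_rsqrt)
      then show ?thesis using \<sigma> by simp
    qed
    then obtain \<sigma>' where \<sigma>': "\<And>r. r < R \<Longrightarrow> \<sigma>' r \<in> grid \<and> dist (\<sigma> r) (\<sigma>' r) \<le> h"
      by (rule choose_net_points[OF grid]) auto
    have "restrict \<sigma>' {..<R} \<in> G" using \<sigma>' by (simp add: G_def)
    moreover have "(\<Sum>r<R. \<bar>\<sigma> r - \<sigma>' r\<bar>) \<le> (\<Sum>r<R. h)"
      using \<sigma>' by (intro sum_mono) (simp add: dist_real_def)
    moreover have "(\<Sum>r<R. \<bar>\<sigma>' r\<bar>) \<le> (\<Sum>r<R. \<bar>\<sigma> r\<bar> + h)"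
      using \<sigma>' by (intro sum_mono) (force simp: dist_real_def)
    then have "(\<Sum>r<R. \<bar>\<sigma>' r\<bar>) \<le> sqrt (real R) * \<Gamma> + real R * h"
      using sum_abs_le_sqrt_sum_squares[of \<sigma> R] mult_left_mono[OF \<sigma>, of "sqrt R"]
      by (simp add: sum.distrib)
    ultimately show ?thesis by (intro bexI[of _ "restrict \<sigma>' {..<R}"]) auto
  qed
  ultimately show ?thesis by (rule that)
qed

definition rank_one_sum :: "nat \<Rightarrow> (nat \<Rightarrow> real) \<Rightarrow> (nat \<Rightarrow> real ^ 'm) \<Rightarrow> (nat \<Rightarrow> real ^ 'n)
    \<Rightarrow> real ^ 'n ^ 'm" where
  "rank_one_sum R \<sigma> u v = (\<Sum>r<R. \<sigma> r *\<^sub>R outer (u r) (v r))"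

lemma dist_rank_one_sum_le:
  assumes "\<And>r. r < R \<Longrightarrow> norm (u r) = 1 \<and> norm (v r) = 1"
    and "\<And>r. r < R \<Longrightarrow> dist (u r) (u' r) \<le> \<delta>1 \<and> dist (v r) (v' r) \<le> \<delta>2"
  shows "dist (rank_one_sum R \<sigma> u v) (rank_one_sum R \<sigma>' u' v')
    \<le> (\<Sum>r<R. \<bar>\<sigma> r - \<sigma>' r\<bar>) + (\<Sum>r<R. \<bar>\<sigma>' r\<bar>) * (\<delta>1 + (1 + \<delta>1) * \<delta>2)"
proof -
  have "dist (rank_one_sum R \<sigma> u v) (rank_one_sum R \<sigma>' u' v')
      = norm (\<Sum>r<R. \<sigma> r *\<^sub>R outer (u r) (v r) - \<sigma>' r *\<^sub>R outer (u' r) (v' r))"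
    by (simp add: rank_one_sum_def dist_norm sum_subtractf)
  also have "\<dots> \<le> (\<Sum>r<R. \<bar>\<sigma> r - \<sigma>' r\<bar> + \<bar>\<sigma>' r\<bar> * (\<delta>1 + (1 + \<delta>1) * \<delta>2))"
    using assms by (intro order_trans[OF norm_sum] sum_mono norm_rank_one_diff_le) (auto simp: dist_norm)
  also have "\<dots> = (\<Sum>r<R. \<bar>\<sigma> r - \<sigma>' r\<bar>) + (\<Sum>r<R. \<bar>\<sigma>' r\<bar>) * (\<delta>1 + (1 + \<delta>1) * \<delta>2)"
    by (simp add: sum.distrib sum_distrib_right)
  finally show ?thesis .
qed

lemma covering_number_KRG_le:
  fixes G :: "(nat \<Rightarrow> real) set"
  assumes "finite G"
    and G: "\<And>\<sigma>. sqrt (\<Sum>r<R. (\<sigma> r)\<^sup>2) \<le> \<Gamma> \<Longrightarrow>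
      \<exists>\<sigma>'\<in>G. (\<Sum>r<R. \<bar>\<sigma> r - \<sigma>' r\<bar>) \<le> \<eta> \<and> (\<Sum>r<R. \<bar>\<sigma>' r\<bar>) \<le> B"
    and "0 < \<delta>1" "0 < \<delta>2" and budget: "\<eta> + B * (\<delta>1 + (1 + \<delta>1) * \<delta>2) \<le> \<epsilon>"
  shows "covering_number (KRG R \<Gamma> s1 s2 :: (real ^ 'n ^ 'm) set) \<epsilon>
    \<le> card G * covering_number (Kns s1 \<inter> sphere 0 1 :: (real ^ 'm) set) \<delta>1 ^ R
             * covering_number (Kns s2 \<inter> sphere 0 1 :: (real ^ 'n) set) \<delta>2 ^ R"
proof -
  obtain U :: "(real ^ 'm) set" where "finite U" and U: "Kns s1 \<inter> sphere 0 1 \<subseteq> (\<Union>c\<in>U. cball c \<delta>1)"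
    and card_U: "card U = covering_number (Kns s1 \<inter> sphere 0 1 :: (real ^ 'm) set) \<delta>1"
    by (rule minimal_cball_net_exists[where S = "Kns s1 \<inter> sphere 0 1", OF _ \<open>0 < \<delta>1\<close>]) auto
  obtain V :: "(real ^ 'n) set" where "finite V" and V: "Kns s2 \<inter> sphere 0 1 \<subseteq> (\<Union>c\<in>V. cball c \<delta>2)"
    and card_V: "card V = covering_number (Kns s2 \<inter> sphere 0 1 :: (real ^ 'n) set) \<delta>2"
    by (rule minimal_cball_net_exists[where S = "Kns s2 \<inter> sphere 0 1", OF _ \<open>0 < \<delta>2\<close>]) auto
  define D where "D = G \<times> PiE {..<R} (\<lambda>_. U) \<times> PiE {..<R} (\<lambda>_. V)"
  define f :: "(nat \<Rightarrow> real) \<times> (nat \<Rightarrow> real ^ 'm) \<times> (nat \<Rightarrow> real ^ 'n) \<Rightarrow> real ^ 'n ^ 'm"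
    where "f = (\<lambda>(\<sigma>', u', v'). rank_one_sum R \<sigma>' u' v')"
  have "finite D" unfolding D_def using \<open>finite G\<close> \<open>finite U\<close> \<open>finite V\<close> by (simp add: finite_PiE)
  have "KRG R \<Gamma> s1 s2 \<subseteq> (\<Union>c\<in>f ` D. cball c \<epsilon>)"
  proof
    fix Z assume "Z \<in> (KRG R \<Gamma> s1 s2 :: (real ^ 'n ^ 'm) set)"
    then obtain \<sigma> u v where Z: "Z = rank_one_sum R \<sigma> u v"
        and uv: "\<forall>r<R. u r \<in> Kns s1 \<and> v r \<in> Kns s2 \<and> norm (u r) = 1 \<and> norm (v r) = 1"
        and \<sigma>: "sqrt (\<Sum>r<R. (\<sigma> r)\<^sup>2) \<le> \<Gamma>"
      unfolding KRG_def rank_one_sum_def by blast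
    obtain \<sigma>' where "\<sigma>' \<in> G" and \<sigma>': "(\<Sum>r<R. \<bar>\<sigma> r - \<sigma>' r\<bar>) \<le> \<eta>" "(\<Sum>r<R. \<bar>\<sigma>' r\<bar>) \<le> B"
      using G[OF \<sigma>] by blast
    obtain u' where u': "\<And>r. r < R \<Longrightarrow> u' r \<in> U \<and> dist (u r) (u' r) \<le> \<delta>1"
      by (rule choose_net_points[OF U, of R u]) (use uv in auto)
    obtain v' where v': "\<And>r. r < R \<Longrightarrow> v' r \<in> V \<and> dist (v r) (v' r) \<le> \<delta>2"
      by (rule choose_net_points[OF V, of R v]) (use uv in auto)
    have "dist Z (rank_one_sum R \<sigma>' u' v')
        \<le> (\<Sum>r<R. \<bar>\<sigma> r - \<sigma>' r\<bar>) + (\<Sum>r<R. \<bar>\<sigma>' r\<bar>) * (\<delta>1 + (1 + \<delta>1) * \<delta>2)"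
      unfolding Z using uv u' v' by (intro dist_rank_one_sum_le) auto
    also have "\<dots> \<le> \<eta> + B * (\<delta>1 + (1 + \<delta>1) * \<delta>2)"
      using \<sigma>' \<open>0 < \<delta>1\<close> \<open>0 < \<delta>2\<close> by (intro add_mono mult_right_mono) auto
    finally have "dist Z (f (\<sigma>', restrict u' {..<R}, restrict v' {..<R})) \<le> \<epsilon>"
      using budget by (simp add: f_def rank_one_sum_def)
    moreover have "(\<sigma>', restrict u' {..<R}, restrict v' {..<R}) \<in> D"
      using \<open>\<sigma>' \<in> G\<close> u' v' by (auto simp: D_def)
    ultimately show "Z \<in> (\<Union>c\<in>f ` D. cball c \<epsilon>)" by (auto simp: dist_commute)
  qed
  then have "covering_number (KRG R \<Gamma> s1 s2 :: (real ^ 'n ^ 'm) set) \<epsilon> \<le> card (f ` D)"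
    using \<open>finite D\<close> by (intro covering_number_le) auto
  also have "\<dots> \<le> card D" using \<open>finite D\<close> by (rule card_image_le)
  also have "\<dots> = card G * card U ^ R * card V ^ R"
    by (simp add: D_def card_cartesian_product card_PiE)
  finally show ?thesis by (simp add: card_U card_V)
qed

lemma rank_one_error_budget:
  fixes b \<epsilon> :: real
  assumes "0 < \<epsilon>" "\<epsilon> < b"
  shows "\<epsilon> / 3 + (b + \<epsilon> / 3) * (\<epsilon> / (5 * b) + (1 + \<epsilon> / (5 * b)) * (\<epsilon> / (5 * b))) \<le> \<epsilon>"
proof -
  define a where "a = \<epsilon> / b"
  have a: "0 < a" "a < 1" using assms by (auto simp: a_def)
  have \<epsilon>: "\<epsilon> = a * b" using assms by (simp add: a_def)
  have "(b + \<epsilon> / 3) * (\<epsilon> / (5 * b) + (1 + \<epsilon> / (5 * b)) * (\<epsilon> / (5 * b)))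
      = \<epsilon> * ((1 + a / 3) * (2 / 5 + a / 25))"
    using assms unfolding \<epsilon> by (simp add: field_simps)
  also have "\<dots> \<le> \<epsilon> * ((4 / 3) * (11 / 25))"
    using a assms by (intro mult_left_mono mult_mono) auto
  finally show ?thesis using assms by linarith
qed

lemma sqrt_le_self:
  fixes x :: real
  assumes "1 \<le> x"
  shows "sqrt x \<le> x"
  using assms by (intro real_le_lsqrt) (simp_all add: power2_eq_square)

lemma ln_le_if_le_exp:
  fixes x L :: real
  assumes "0 \<le> x" "x \<le> exp L" "0 \<le> L"
  shows "ln x \<le> L"
proof (cases "x = 0")
  case False
  with assms have "ln x \<le> ln (exp L)" by (subst ln_le_cancel_iff) auto
  then show ?thesis by simp
qed (use assms in simp)

lemma ln_covering_number_KRG_le: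
  fixes R :: nat and \<Gamma> \<epsilon> LU LV :: real
  assumes R: "1 \<le> R" and \<Gamma>: "1 \<le> \<Gamma>" and \<epsilon>: "0 < \<epsilon>" "\<epsilon> < \<Gamma> * sqrt R"
    and U: "real (covering_number (Kns s1 \<inter> sphere 0 1 :: (real ^ 'm) set) (\<epsilon> / (5 * \<Gamma> * sqrt R)))
              \<le> exp LU" "0 \<le> LU"
    and V: "real (covering_number (Kns s2 \<inter> sphere 0 1 :: (real ^ 'n) set) (\<epsilon> / (5 * \<Gamma> * sqrt R)))
              \<le> exp LV" "0 \<le> LV"
  shows "ln (real (covering_number (KRG R \<Gamma> s1 s2 :: (real ^ 'n ^ 'm) set) \<epsilon>))
    \<le> R * ln (8 * \<Gamma> * R / \<epsilon>) + R * LU + R * LV"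
proof -
  define b where "b = \<Gamma> * sqrt R"
  define \<delta> where "\<delta> = \<epsilon> / (5 * b)"
  define h where "h = \<epsilon> / (3 * R)"
  have "0 < h" "0 < \<delta>" using R \<Gamma> \<epsilon> by (simp_all add: h_def \<delta>_def b_def)
  have "b \<le> \<Gamma> * R" using R \<Gamma> sqrt_le_self[of "real R"] by (simp add: b_def)
  then have ratio: "1 \<le> \<Gamma> * R / \<epsilon>" using \<epsilon> by (simp add: b_def)
  obtain G where "finite G" and card_G: "real (card G) \<le> (2 * \<Gamma> / h + 2) ^ R"
    and G: "\<And>\<sigma>. sqrt (\<Sum>r<R. (\<sigma> r)\<^sup>2) \<le> \<Gamma> \<Longrightarrow> \<exists>\<sigma>'\<in>G. (\<Sum>r<R. \<bar>\<sigma> r - \<sigma>' r\<bar>) \<le> real R * h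
         \<and> (\<Sum>r<R. \<bar>\<sigma>' r\<bar>) \<le> sqrt (real R) * \<Gamma> + real R * h"
    using coefficient_grid_exists[OF \<open>0 < h\<close>, of \<Gamma> R] \<Gamma> by auto
  have "real R * h = \<epsilon> / 3" "sqrt (real R) * \<Gamma> = b" using R by (simp_all add: h_def b_def)
  note G = G[unfolded this]
  have "\<epsilon> < b" using \<epsilon> by (simp add: b_def)
  from rank_one_error_budget[OF \<epsilon>(1) this]
  have "covering_number (KRG R \<Gamma> s1 s2 :: (real ^ 'n ^ 'm) set) \<epsilon>
      \<le> card G * covering_number (Kns s1 \<inter> sphere 0 1 :: (real ^ 'm) set) \<delta> ^ R
               * covering_number (Kns s2 \<inter> sphere 0 1 :: (real ^ 'n) set) \<delta> ^ R"
    unfolding \<delta>_def[symmetric] by (intro covering_number_KRG_le[OF \<open>finite G\<close> G \<open>0 < \<delta>\<close> \<open>0 < \<delta>\<close>])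
  also have "real \<dots> \<le> (8 * \<Gamma> * R / \<epsilon>) ^ R * exp LU ^ R * exp LV ^ R"
  proof -
    have "2 * \<Gamma> / h + 2 \<le> 8 * \<Gamma> * R / \<epsilon>"
      using R \<epsilon> ratio by (simp add: h_def field_simps)
    then have "real (card G) \<le> (8 * \<Gamma> * R / \<epsilon>) ^ R"
      using \<open>0 < h\<close> \<Gamma> by (intro order_trans[OF card_G] power_mono) auto
    then show ?thesis
      using U V by (auto simp: \<delta>_def b_def mult.assoc intro!: mult_mono power_mono)
  qed
  also have "\<dots> = exp (R * ln (8 * \<Gamma> * R / \<epsilon>) + R * LU + R * LV)"
    using ratio \<epsilon> by (simp add: exp_add exp_of_nat_mult mult.assoc)
  finally show ?thesis
    using ratio U V by (intro ln_le_if_le_exp) (auto simp: mult.assoc)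
qed

section \<open>The three regimes\<close>

lemma covering_number_Kns_sphere_dense:
  fixes R :: nat and \<Gamma> \<epsilon> s :: real
  assumes R: "1 \<le> R" and \<Gamma>: "1 \<le> \<Gamma>" and \<epsilon>: "0 < \<epsilon>" "\<epsilon> < \<Gamma> * sqrt R"
  shows "real (covering_number (Kns s \<inter> sphere 0 1 :: (real ^ 'n) set) (\<epsilon> / (5 * \<Gamma> * sqrt R)))
    \<le> exp (CARD('n) * ln (36 * \<Gamma> * R / \<epsilon>))"
proof -
  have "0 < \<epsilon> / (5 * \<Gamma> * sqrt R)" "\<epsilon> / (5 * \<Gamma> * sqrt R) \<le> 1"
    using R \<Gamma> \<epsilon> by (simp_all add: field_simps)
  then have "real (covering_number (Kns s \<inter> sphere 0 1 :: (real ^ 'n) set) (\<epsilon> / (5 * \<Gamma> * sqrt R)))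
      \<le> (3 / (\<epsilon> / (5 * \<Gamma> * sqrt R))) ^ CARD('n)"
    using covering_number_cball_le[of "Kns s \<inter> sphere 0 1 :: (real ^ 'n) set"] by force
  also have "\<dots> \<le> (36 * \<Gamma> * R / \<epsilon>) ^ CARD('n)"
    using R \<Gamma> \<epsilon> sqrt_le_self[of "real R"] by (intro power_mono) (simp_all add: field_simps)
  also have "\<dots> = exp (CARD('n) * ln (36 * \<Gamma> * R / \<epsilon>))"
    using R \<Gamma> \<epsilon> by (simp add: exp_of_nat_mult)
  finally show ?thesis .
qed

lemma sparsity_condition:
  fixes R :: nat and \<Gamma> \<epsilon> s n :: real
  assumes "1 \<le> R" "0 < \<Gamma>" "0 < s" "0 < n" and "12 * \<Gamma> * sqrt (R * s / n) \<le> \<epsilon>"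
  shows "144 \<le> n * \<epsilon>\<^sup>2 / (\<Gamma>\<^sup>2 * R * s)"
proof -
  have "(12 * \<Gamma> * sqrt (R * s / n))\<^sup>2 \<le> \<epsilon>\<^sup>2"
    using assms by (intro power_mono) auto
  then show ?thesis using assms by (simp add: power_mult_distrib field_simps)
qed

lemma covering_number_Kns_sphere_sparse:
  fixes R :: nat and \<Gamma> \<epsilon> s L :: real
  assumes R: "1 \<le> R" and \<Gamma>: "1 \<le> \<Gamma>" and \<epsilon>: "0 < \<epsilon>" "\<epsilon> < \<Gamma> * sqrt R" and s: "1 \<le> s"
    and sparse: "12 * \<Gamma> * sqrt (R * s / CARD('n)) \<le> \<epsilon>"
    and L: "ln (CARD('n) * \<epsilon>\<^sup>2 / (\<Gamma>\<^sup>2 * R * s)) \<le> L"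
  shows "real (covering_number (Kns s \<inter> sphere 0 1 :: (real ^ 'n) set) (\<epsilon> / (5 * \<Gamma> * sqrt R)))
    \<le> exp (144 * \<Gamma>\<^sup>2 * R * s / \<epsilon>\<^sup>2 * L)"
proof -
  define a where "a = \<epsilon> / (\<Gamma> * sqrt R)"
  have a: "0 < a" "a \<le> 1" using R \<Gamma> \<epsilon> by (simp_all add: a_def)
  have a2: "a\<^sup>2 = \<epsilon>\<^sup>2 / (\<Gamma>\<^sup>2 * R)" using R by (simp add: a_def power_divide power_mult_distrib)
  have "144 \<le> CARD('n) * a\<^sup>2 / s"
    using sparsity_condition[OF R _ _ _ sparse] \<Gamma> s by (simp add: a2 field_simps)
  moreover have "ln (CARD('n) * a\<^sup>2 / s) \<le> L" using L by (simp add: a2 field_simps)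
  moreover have "Kns s \<inter> sphere 0 1 \<subseteq> {u :: real ^ 'n. l1norm u \<le> sqrt s}" by (auto simp: Kns_def)
  ultimately have "real (covering_number (Kns s \<inter> sphere 0 1 :: (real ^ 'n) set) (a / 5))
      \<le> exp (144 * (s / a\<^sup>2) * L)"
    using a s by (intro covering_number_sparse_le) auto
  moreover have "a / 5 = \<epsilon> / (5 * \<Gamma> * sqrt R)" by (simp add: a_def)
  moreover have "144 * (s / a\<^sup>2) * L = 144 * \<Gamma>\<^sup>2 * R * s / \<epsilon>\<^sup>2 * L" using \<epsilon> by (simp add: a2)
  ultimately show ?thesis by simp
qed

lemma ln_sparsity_le:
  fixes R :: nat and \<Gamma> \<epsilon> s n s1 n1 :: real
  assumes R: "1 \<le> R" and \<Gamma>: "1 \<le> \<Gamma>" and \<epsilon>: "0 < \<epsilon>" "\<epsilon> < \<Gamma> * sqrt R"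
    and "0 < n" "0 < s" "0 < s1" and ratio: "n / s \<le> n1 / s1"
  shows "ln (n * \<epsilon>\<^sup>2 / (\<Gamma>\<^sup>2 * R * s)) \<le> ln (9 * \<epsilon> * n1 / (6 * \<Gamma> * sqrt R * s1))"
proof -
  define a where "a = \<epsilon> / (\<Gamma> * sqrt R)"
  have a: "0 < a" "a \<le> 1" using R \<Gamma> \<epsilon> by (simp_all add: a_def)
  have "n * \<epsilon>\<^sup>2 / (\<Gamma>\<^sup>2 * R * s) = a\<^sup>2 * (n / s)"
    using R by (simp add: a_def power_divide power_mult_distrib)
  also have "\<dots> \<le> a * (n1 / s1)"
    using a assms ratio by (intro mult_mono) (auto simp: power2_eq_square mult_le_cancel_left1)
  also have "\<dots> \<le> 9 * \<epsilon> * n1 / (6 * \<Gamma> * sqrt R * s1)"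
  proof -
    have "0 < n / s" using assms by simp
    then have "0 \<le> n1 / s1" using ratio by linarith
    then have "0 \<le> a * (n1 / s1)" using a by (intro mult_nonneg_nonneg) auto
    then show ?thesis using R \<Gamma> by (simp add: a_def field_simps)
  qed
  finally show ?thesis using assms by (simp add: ln_mono)
qed

lemma ln_ratio_nonneg:
  fixes R :: nat and c \<Gamma> \<epsilon> :: real
  assumes "1 \<le> R" "0 \<le> \<Gamma>" "0 < \<epsilon>" "\<epsilon> \<le> c * \<Gamma> * sqrt R"
  shows "0 \<le> ln (c * \<Gamma> * R / \<epsilon>)"
proof -
  have "0 \<le> c"
  proof (rule ccontr)
    assume "\<not> 0 \<le> c"
    then have "c * (\<Gamma> * sqrt R) \<le> 0" using assms(2) by (intro mult_nonpos_nonneg) auto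
    then show False using assms(3,4) by (simp add: mult.assoc)
  qed
  then have "c * \<Gamma> * sqrt R \<le> c * \<Gamma> * R"
    using sqrt_le_self[of "real R"] assms by (intro mult_left_mono) auto
  then show ?thesis using assms by simp
qed

lemma ln_covering_number_KRG_dense:
  fixes R :: nat and \<Gamma> \<epsilon> :: real
  assumes "1 \<le> R" "1 \<le> \<Gamma>" "0 < \<epsilon>" "\<epsilon> < \<Gamma> * sqrt R"
  shows "ln (real (covering_number (KRG R \<Gamma> s1 s2 :: (real ^ 'n ^ 'm) set) \<epsilon>))
    \<le> R * (real CARD('m) + real CARD('n) + 1) * ln (36 * \<Gamma> * R / \<epsilon>)"
proof -
  have L: "0 \<le> ln (36 * \<Gamma> * R / \<epsilon>)" "ln (8 * \<Gamma> * R / \<epsilon>) \<le> ln (36 * \<Gamma> * R / \<epsilon>)"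
  proof -
    show "0 \<le> ln (36 * \<Gamma> * R / \<epsilon>)" using assms by (intro ln_ratio_nonneg) auto
    show "ln (8 * \<Gamma> * R / \<epsilon>) \<le> ln (36 * \<Gamma> * R / \<epsilon>)"
      using assms by (intro ln_mono divide_right_mono mult_right_mono) auto
  qed
  have "ln (real (covering_number (KRG R \<Gamma> s1 s2 :: (real ^ 'n ^ 'm) set) \<epsilon>))
      \<le> R * ln (8 * \<Gamma> * R / \<epsilon>) + R * (CARD('m) * ln (36 * \<Gamma> * R / \<epsilon>))
        + R * (CARD('n) * ln (36 * \<Gamma> * R / \<epsilon>))"
    using assms L by (intro ln_covering_number_KRG_le covering_number_Kns_sphere_dense) auto
  also have "\<dots> \<le> R * (real CARD('m) + real CARD('n) + 1) * ln (36 * \<Gamma> * R / \<epsilon>)"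
    using L by (simp add: algebra_simps mult_left_mono)
  finally show ?thesis .
qed

lemma ln_covering_number_KRG_mixed:
  fixes R :: nat and \<Gamma> \<epsilon> s1 :: real
  assumes R: "1 \<le> R" and \<Gamma>: "1 \<le> \<Gamma>" and \<epsilon>: "0 < \<epsilon>" "\<epsilon> < \<Gamma> * sqrt R" and s1: "1 \<le> s1"
    and sparse: "12 * \<Gamma> * sqrt (R * s1 / real CARD('m)) \<le> \<epsilon>"
  shows "ln (real (covering_number (KRG R \<Gamma> s1 s2 :: (real ^ 'n ^ 'm) set) \<epsilon>))
    \<le> 144 * \<Gamma>\<^sup>2 * R\<^sup>2 * s1 / \<epsilon>\<^sup>2 * ln (9 * \<epsilon> * real CARD('m) / (6 * \<Gamma> * sqrt R * s1))
      + R * (real CARD('n) + 1) * ln (36 * \<Gamma> * R / \<epsilon>)"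
proof -
  define L1 where "L1 = ln (9 * \<epsilon> * real CARD('m) / (6 * \<Gamma> * sqrt R * s1))"
  define L36 where "L36 = ln (36 * \<Gamma> * R / \<epsilon>)"
  have sparse_L1: "ln (CARD('m) * \<epsilon>\<^sup>2 / (\<Gamma>\<^sup>2 * R * s1)) \<le> L1"
    unfolding L1_def using assms by (intro ln_sparsity_le) auto
  have "144 \<le> CARD('m) * \<epsilon>\<^sup>2 / (\<Gamma>\<^sup>2 * R * s1)"
    using assms by (intro sparsity_condition) auto
  then have "0 \<le> ln (CARD('m) * \<epsilon>\<^sup>2 / (\<Gamma>\<^sup>2 * R * s1))" by simp
  then have "0 \<le> L1" using sparse_L1 by linarith
  have L36: "0 \<le> L36" "ln (8 * \<Gamma> * R / \<epsilon>) \<le> L36" unfolding L36_def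
  proof -
    show "0 \<le> ln (36 * \<Gamma> * R / \<epsilon>)" using assms by (intro ln_ratio_nonneg) auto
    show "ln (8 * \<Gamma> * R / \<epsilon>) \<le> ln (36 * \<Gamma> * R / \<epsilon>)"
      using assms by (intro ln_mono divide_right_mono mult_right_mono) auto
  qed
  have "ln (real (covering_number (KRG R \<Gamma> s1 s2 :: (real ^ 'n ^ 'm) set) \<epsilon>))
      \<le> R * ln (8 * \<Gamma> * R / \<epsilon>) + R * (144 * \<Gamma>\<^sup>2 * R * s1 / \<epsilon>\<^sup>2 * L1) + R * (CARD('n) * L36)"
    using assms sparse_L1 \<open>0 \<le> L1\<close> L36 unfolding L36_def
    by (intro ln_covering_number_KRG_le covering_number_Kns_sphere_sparse covering_number_Kns_sphere_dense) auto
  also have "\<dots> \<le> 144 * \<Gamma>\<^sup>2 * R\<^sup>2 * s1 / \<epsilon>\<^sup>2 * L1 + R * (real CARD('n) + 1) * L36"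
    using mult_left_mono[OF L36(2), of "real R"] by (simp add: algebra_simps power2_eq_square)
  finally show ?thesis unfolding L1_def L36_def .
qed

lemma ln_covering_number_KRG_sparse:
  fixes R :: nat and \<Gamma> \<epsilon> s1 s2 :: real
  assumes R: "1 \<le> R" and \<Gamma>: "1 \<le> \<Gamma>" and \<epsilon>: "0 < \<epsilon>" "\<epsilon> < \<Gamma> * sqrt R"
    and s: "1 \<le> s1" "1 \<le> s2" and ratio: "s1 / real CARD('m) \<le> s2 / real CARD('n)"
    and sparse: "12 * \<Gamma> * sqrt (R * s2 / real CARD('n)) \<le> \<epsilon>"
  shows "ln (real (covering_number (KRG R \<Gamma> s1 s2 :: (real ^ 'n ^ 'm) set) \<epsilon>))
    \<le> 144 * \<Gamma>\<^sup>2 * R\<^sup>2 * (s1 + s2) / \<epsilon>\<^sup>2 * ln (9 * \<epsilon> * real CARD('m) / (6 * \<Gamma> * sqrt R * s1))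
      + R * ln (18 * \<Gamma> * R / \<epsilon>)"
proof -
  define L1 where "L1 = ln (9 * \<epsilon> * real CARD('m) / (6 * \<Gamma> * sqrt R * s1))"
  define L18 where "L18 = ln (18 * \<Gamma> * R / \<epsilon>)"
  have "sqrt (R * s1 / CARD('m)) \<le> sqrt (R * s2 / CARD('n))"
    using ratio by (simp add: mult_left_mono flip: times_divide_eq_right)
  then have "12 * \<Gamma> * sqrt (R * s1 / CARD('m)) \<le> 12 * \<Gamma> * sqrt (R * s2 / CARD('n))"
    using \<Gamma> by (intro mult_left_mono) auto
  with sparse have sparse1: "12 * \<Gamma> * sqrt (R * s1 / CARD('m)) \<le> \<epsilon>" by linarith
  have "CARD('n) / s2 \<le> CARD('m) / s1"
    using ratio s by (simp add: field_simps)
  then have sparse_L1: "ln (CARD('m) * \<epsilon>\<^sup>2 / (\<Gamma>\<^sup>2 * R * s1)) \<le> L1"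
      "ln (CARD('n) * \<epsilon>\<^sup>2 / (\<Gamma>\<^sup>2 * R * s2)) \<le> L1"
    unfolding L1_def using assms by (intro ln_sparsity_le; simp)+
  have "144 \<le> CARD('m) * \<epsilon>\<^sup>2 / (\<Gamma>\<^sup>2 * R * s1)"
    using assms sparse1 by (intro sparsity_condition) auto
  then have "0 \<le> ln (CARD('m) * \<epsilon>\<^sup>2 / (\<Gamma>\<^sup>2 * R * s1))" by simp
  then have "0 \<le> L1" using sparse_L1 by linarith
  have L18: "ln (8 * \<Gamma> * R / \<epsilon>) \<le> L18"
    unfolding L18_def using assms by (intro ln_mono divide_right_mono mult_right_mono) auto
  have "ln (real (covering_number (KRG R \<Gamma> s1 s2 :: (real ^ 'n ^ 'm) set) \<epsilon>))
      \<le> R * ln (8 * \<Gamma> * R / \<epsilon>) + R * (144 * \<Gamma>\<^sup>2 * R * s1 / \<epsilon>\<^sup>2 * L1)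
        + R * (144 * \<Gamma>\<^sup>2 * R * s2 / \<epsilon>\<^sup>2 * L1)"
    using assms sparse1 sparse_L1 \<open>0 \<le> L1\<close>
    by (intro ln_covering_number_KRG_le covering_number_Kns_sphere_sparse) auto
  also have "\<dots> \<le> 144 * \<Gamma>\<^sup>2 * R\<^sup>2 * (s1 + s2) / \<epsilon>\<^sup>2 * L1 + R * L18"
    using mult_left_mono[OF L18, of "real R"] by (simp add: algebra_simps power2_eq_square add_divide_distrib)
  finally show ?thesis unfolding L1_def L18_def .
qed

theorem mainTheorem10:
  fixes R :: nat and \<Gamma> s1 s2 \<epsilon> n1 n2 :: real and N :: nat
  defines "n1 \<equiv> real CARD('m)" and "n2 \<equiv> real CARD('n)"
      and "N \<equiv> covering_number (KRG R \<Gamma> s1 s2 :: (real ^ 'n ^ 'm) set) \<epsilon>"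
  assumes "R \<ge> 1" and "\<Gamma> \<ge> 1"
      and "1 \<le> s1" and "s1 \<le> n1" and "1 \<le> s2" and "s2 \<le> n2"
      and "s1 / n1 \<le> s2 / n2"
      and "0 < \<epsilon>" and "\<epsilon> < 6 * \<Gamma> * sqrt R"
  shows "(\<epsilon> < 12 * \<Gamma> * sqrt (R * s1 / n1) \<longrightarrow>
           ln (real N) \<le> R * (n1 + n2 + 1) * ln (36 * \<Gamma> * R / \<epsilon>))
       \<and> (12 * \<Gamma> * sqrt (R * s1 / n1) \<le> \<epsilon> \<and> \<epsilon> < 12 * \<Gamma> * sqrt (R * s2 / n2) \<longrightarrow>
           ln (real N) \<le> 144 * \<Gamma>\<^sup>2 * R\<^sup>2 * s1 / \<epsilon>\<^sup>2 * ln (9 * \<epsilon> * n1 / (6 * \<Gamma> * sqrt R * s1))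
                         + R * (n2 + 1) * ln (36 * \<Gamma> * R / \<epsilon>))
       \<and> (12 * \<Gamma> * sqrt (R * s2 / n2) \<le> \<epsilon> \<longrightarrow>
           ln (real N) \<le> 144 * \<Gamma>\<^sup>2 * R\<^sup>2 * (s1 + s2) / \<epsilon>\<^sup>2 * ln (9 * \<epsilon> * n1 / (6 * \<Gamma> * sqrt R * s1))
                         + R * ln (18 * \<Gamma> * R / \<epsilon>))"
proof (cases "\<Gamma> * sqrt R \<le> \<epsilon>")
  case True
  then have ln_N: "ln (real N) \<le> 0"
    unfolding N_def by (intro ln_covering_number_KRG_nonpos) (simp add: mult.commute)
  have L36: "0 \<le> ln (36 * \<Gamma> * R / \<epsilon>)" and L18: "0 \<le> ln (18 * \<Gamma> * R / \<epsilon>)"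
    using assms by (intro ln_ratio_nonneg; simp)+
  have "\<Gamma> * sqrt R * s1 \<le> \<epsilon> * n1" using True assms by (intro mult_mono) auto
  moreover have "0 \<le> \<epsilon> * n1" using assms by simp
  ultimately have "6 * (\<Gamma> * sqrt R * s1) \<le> 9 * (\<epsilon> * n1)" by linarith
  then have L1: "0 \<le> ln (9 * \<epsilon> * n1 / (6 * \<Gamma> * sqrt R * s1))"
    using assms by (simp add: le_divide_eq mult.assoc)
  show ?thesis
    by (intro conjI impI order_trans[OF ln_N] add_nonneg_nonneg mult_nonneg_nonneg)
       (use L36 L18 L1 assms in auto)
next
  case False
  then have hyps: "1 \<le> R" "1 \<le> \<Gamma>" "0 < \<epsilon>" "\<epsilon> < \<Gamma> * sqrt R" using assms by auto
  have "s1 / real CARD('m) \<le> s2 / real CARD('n)" using assms by simp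
  from ln_covering_number_KRG_dense[OF hyps] ln_covering_number_KRG_mixed[OF hyps \<open>1 \<le> s1\<close>]
    ln_covering_number_KRG_sparse[OF hyps \<open>1 \<le> s1\<close> \<open>1 \<le> s2\<close> this]
  show ?thesis unfolding N_def n1_def n2_def by blast
qed

end
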